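(* Let $u:\mathbb{R}^n\supseteq\bigcup_{l}P_l\to\mathbb{R}^m$ be a continuous piecewise affine function with $u(z)=F_lz+G_l$ for $z\in P_l$, $l=1,\dots,n_r$, where $F_l\in\mathbb{R}^{m\times n}$, $G_l\in\mathbb{R}^m$ and $P_l=\{z\in\mathbb{R}^n: H_lz\le K_l\}$ are polyhedra. Let $i\neq j$ and let the hyperplane $hz=k$ ($h\in\mathbb{R}^{1\times n}\setminus\{0\}$, $k\in\mathbb{R}$) border $P_i$ and $P_j$, with $hz\le k$ for $z\in P_j$ and $hz\ge k$ for $z\in P_i$. Let $\epsilon\ge0$ and let the quantized data be $\hat F_i=F_i+\Delta F_i$, $\hat G_i=G_i+\Delta G_i$, $\hat h=h+\Delta h$, $\hat k=k+\Delta k$, $\hat x=x+\Delta x$, where every entry of $\Delta F_i,\Delta G_i,\Delta h,\Delta k,\Delta x$ has absolute value at most $\epsilon$. Let $x\in P_j$, suppose the orthogonal projection $x_p$ of $x$ onto the hyperplane $\{z:hz=k\}$ lies in $P_i\cap P_j$ (the common facet), and suppose $\hat h\hat x\ge\hat k$ (the quantized state lies on the $\hat P_i$ side of the quantized hyperplane), with the quantized control given by $\hat u(\hat x)=\hat F_i\hat x+\hat G_i$. Then, with $\delta=\epsilon(\|h\|_1+\|x\|_1+n\epsilon+1)$, $$\|\hat u(\hat x)-u(x)\|_\infty\le \frac{\delta}{\|h\|_2^2}\,\|(F_i-F_j)h'\|_\infty+\|F_i\Delta x+\Delta F_ix+\Delta F_i\Delta x+\Delta G_i\|_\infty,$$ and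 moreover $$\|F_i\Delta x+\Delta F_ix+\Delta F_i\Delta x+\Delta G_i\|_\infty\le \|\Delta F_i\|_\infty\|x\|_\infty+\|\Delta G_i\|_\infty+\|\hat F_i\|_\infty\,\epsilon \quad\text{(a posteriori bound)},$$ as well as $$\|F_i\Delta x+\Delta F_ix+\Delta F_i\Delta x+\Delta G_i\|_\infty\le \epsilon\left(\|F_i\|_\infty+n\|x\|_\infty+n\epsilon+1\right)\quad\text{(a priori bound)}.$$
   Context: $h'$ denotes the transpose of $h$. For vectors, $\|\cdot\|_1,\|\cdot\|_2,\|\cdot\|_\infty$ are the usual $1$-, $2$-, $\infty$-norms; for a matrix $M$, $\|M\|_\infty$ is the induced $\infty$-norm (maximum absolute row sum). Here $u(x)=F_jx+G_j$ is the exact control (explicit MPC feedback law) at the true state $x\in P_j$, and $\hat u(\hat x)$ is the control computed by the controller from quantized data, in which the quantized state is located in the quantized region $\hat P_i$. Continuity of $u$ means $F_iz+G_i=F_jz+G_j$ for all $z\in P_i\cap P_j$. *)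

theory Defs
  imports "HOL-Analysis.Analysis"
begin

text \<open>Vector 1-norm and infinity-norm on real^'n; induced infinity-norm of a matrix
  (maximum absolute row sum). The 2-norm is the library norm.\<close>

definition vnorm1 :: "real^'n \<Rightarrow> real" where
  "vnorm1 x = (\<Sum>i\<in>UNIV. \<bar>x $ i\<bar>)"

definition vnorm_inf :: "real^'n \<Rightarrow> real" where
  "vnorm_inf x = Max (range (\<lambda>i. \<bar>x $ i\<bar>))"

definition mnorm_inf :: "real^'n^'m \<Rightarrow> real" where
  "mnorm_inf M = Max (range (\<lambda>i. \<Sum>j\<in>UNIV. \<bar>M $ i $ j\<bar>))"

definition hyperplane_proj :: "real^'n \<Rightarrow> real \<Rightarrow> real^'n \<Rightarrow> real^'n" where
  "hyperplane_proj h k x = x - ((h \<bullet> x - k) / (norm h)\<^sup>2) *\<^sub>R h"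

end

theory Submission
  imports Defs
begin

text \<open>The control error splits into the jump of the affine law across the facet plus the
  quantization error E of the piece actually evaluated. The two affine pieces agree at the
  projection x_p = x - t h, so the jump at x equals t (F_i - F_j) h with t = (h x - k) / |h|^2.
  The true state lies on the P_j side of the hyperplane and the quantized state on the P_i side,
  so |h x - k| is bounded by the perturbation of h x caused by quantization, which is at most
  the constant delta. The two bounds on E are triangle inequalities for the induced
  infinity-norm.\<close>

lemma vnorm_inf_le_iff: "vnorm_inf (v::real^'n) \<le> c \<longleftrightarrow> (\<forall>i. \<bar>v $ i\<bar> \<le> c)"
  unfolding vnorm_inf_def by (subst Max_le_iff) auto

lemma abs_le_vnorm_inf: "\<bar>(v::real^'n) $ i\<bar> \<le> vnorm_inf v"
  unfolding vnorm_inf_def by (rule Max_ge) auto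

lemma vnorm_inf_nonneg: "0 \<le> vnorm_inf (v::real^'n)"
  using abs_le_vnorm_inf[of v undefined] by linarith

lemma vnorm_inf_triangle: "vnorm_inf ((a::real^'n) + b) \<le> vnorm_inf a + vnorm_inf b"
  unfolding vnorm_inf_le_iff
proof
  fix i
  have "\<bar>(a + b) $ i\<bar> \<le> \<bar>a $ i\<bar> + \<bar>b $ i\<bar>" by simp
  then show "\<bar>(a + b) $ i\<bar> \<le> vnorm_inf a + vnorm_inf b"
    using abs_le_vnorm_inf[of a i] abs_le_vnorm_inf[of b i] by linarith
qed

lemma vnorm_inf_triangle3:
  "vnorm_inf ((a::real^'n) + b + c) \<le> vnorm_inf a + vnorm_inf b + vnorm_inf c"
  using vnorm_inf_triangle[of "a + b" c] vnorm_inf_triangle[of a b] by linarith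

lemma vnorm_inf_scaleR_le: "vnorm_inf (c *\<^sub>R (v::real^'n)) \<le> \<bar>c\<bar> * vnorm_inf v"
  unfolding vnorm_inf_le_iff
  using abs_le_vnorm_inf[of v] by (simp add: abs_mult mult_left_mono)

lemma row_sum_le_mnorm_inf: "(\<Sum>j\<in>UNIV. \<bar>(M::real^'n^'m) $ i $ j\<bar>) \<le> mnorm_inf M"
  unfolding mnorm_inf_def by (rule Max_ge) auto

lemma mnorm_inf_nonneg: "0 \<le> mnorm_inf (M::real^'n^'m)"
  using row_sum_le_mnorm_inf[of M undefined] sum_nonneg[of UNIV "\<lambda>j. \<bar>M $ undefined $ j\<bar>"]
  by linarith

lemma mnorm_inf_le_entrywise:
  assumes "\<forall>r c. \<bar>(M::real^'n^'m) $ r $ c\<bar> \<le> e"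
  shows "mnorm_inf M \<le> real CARD('n) * e"
  unfolding mnorm_inf_def
proof (subst Max_le_iff, auto)
  fix i
  have "(\<Sum>j\<in>UNIV. \<bar>M $ i $ j\<bar>) \<le> (\<Sum>j\<in>(UNIV::'n set). e)"
    by (rule sum_mono) (use assms in auto)
  then show "(\<Sum>j\<in>UNIV. \<bar>M $ i $ j\<bar>) \<le> real CARD('n) * e" by simp
qed

lemma vnorm1_le_entrywise:
  assumes "\<forall>c. \<bar>(v::real^'n) $ c\<bar> \<le> e"
  shows "vnorm1 v \<le> real CARD('n) * e"
proof -
  have "vnorm1 v \<le> (\<Sum>j\<in>(UNIV::'n set). e)"
    unfolding vnorm1_def by (rule sum_mono) (use assms in auto)
  then show ?thesis by simp
qed

lemma vnorm_inf_matrix_vector_mult_le: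
  "vnorm_inf ((M::real^'n^'m) *v v) \<le> mnorm_inf M * vnorm_inf v"
  unfolding vnorm_inf_le_iff
proof
  fix i
  have "\<bar>(M *v v) $ i\<bar> = \<bar>\<Sum>j\<in>UNIV. M $ i $ j * v $ j\<bar>"
    by (simp add: matrix_vector_mult_def)
  also have "\<dots> \<le> (\<Sum>j\<in>UNIV. \<bar>M $ i $ j\<bar> * vnorm_inf v)"
    by (rule order_trans[OF sum_abs])
      (auto intro!: sum_mono mult_left_mono simp: abs_mult abs_le_vnorm_inf)
  also have "\<dots> = (\<Sum>j\<in>UNIV. \<bar>M $ i $ j\<bar>) * vnorm_inf v"
    by (simp add: sum_distrib_right)
  also have "\<dots> \<le> mnorm_inf M * vnorm_inf v"
    by (rule mult_right_mono[OF row_sum_le_mnorm_inf vnorm_inf_nonneg])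
  finally show "\<bar>(M *v v) $ i\<bar> \<le> mnorm_inf M * vnorm_inf v" .
qed

lemma abs_inner_le_vnorm1_vnorm_inf: "\<bar>(y::real^'n) \<bullet> d\<bar> \<le> vnorm1 y * vnorm_inf d"
proof -
  have "\<bar>y \<bullet> d\<bar> = \<bar>\<Sum>i\<in>UNIV. y $ i * d $ i\<bar>" by (simp add: inner_vec_def)
  also have "\<dots> \<le> (\<Sum>i\<in>UNIV. \<bar>y $ i\<bar> * vnorm_inf d)"
    by (rule order_trans[OF sum_abs])
      (auto intro!: sum_mono mult_left_mono simp: abs_mult abs_le_vnorm_inf)
  also have "\<dots> = vnorm1 y * vnorm_inf d" by (simp add: vnorm1_def sum_distrib_right)
  finally show ?thesis .
qed

lemma affine_pieces_diff_eq:
  fixes A B :: "real^'n^'m"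
  assumes agree: "A *v p + a = B *v p + b" and p: "p = x - t *\<^sub>R h"
  shows "(A *v x + a) - (B *v x + b) = t *\<^sub>R ((A - B) *v h)"
proof -
  have "(A *v x + a) - (B *v x + b) = (A *v p + a) - (B *v p + b) + t *\<^sub>R ((A - B) *v h)"
    unfolding p by (simp add: algebra_simps)
  then show ?thesis using agree by simp
qed

lemma hyperplane_residual_le:
  fixes h dh x dx :: "real^'n"
  assumes "h \<bullet> x \<le> k" "(h + dh) \<bullet> (x + dx) \<ge> k + dk" "\<epsilon> \<ge> 0"
    and "\<forall>c. \<bar>dh $ c\<bar> \<le> \<epsilon>" "\<bar>dk\<bar> \<le> \<epsilon>" "\<forall>c. \<bar>dx $ c\<bar> \<le> \<epsilon>"
  shows "\<bar>h \<bullet> x - k\<bar> \<le> \<epsilon> * (vnorm1 h + vnorm1 x + real CARD('n) * \<epsilon> + 1)"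
proof -
  have dh: "vnorm_inf dh \<le> \<epsilon>" and dx: "vnorm_inf dx \<le> \<epsilon>"
    using assms(4,6) vnorm_inf_le_iff by blast+
  have "k - h \<bullet> x \<le> h \<bullet> dx + x \<bullet> dh + dx \<bullet> dh - dk"
    using assms(2) by (simp add: inner_add_left inner_add_right inner_commute)
  moreover have "h \<bullet> dx \<le> vnorm1 h * \<epsilon>"
    using abs_inner_le_vnorm1_vnorm_inf[of h dx] dx
      mult_left_mono[OF dx, of "vnorm1 h"] sum_nonneg[of UNIV "\<lambda>i. \<bar>h $ i\<bar>"]
    by (simp add: vnorm1_def)
  moreover have "x \<bullet> dh \<le> vnorm1 x * \<epsilon>"
    using abs_inner_le_vnorm1_vnorm_inf[of x dh]
      mult_left_mono[OF dh, of "vnorm1 x"] sum_nonneg[of UNIV "\<lambda>i. \<bar>x $ i\<bar>"]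
    by (simp add: vnorm1_def)
  moreover have "dx \<bullet> dh \<le> real CARD('n) * \<epsilon> * \<epsilon>"
    using abs_inner_le_vnorm1_vnorm_inf[of dx dh] vnorm1_le_entrywise[OF assms(6)]
      mult_mono[OF vnorm1_le_entrywise[OF assms(6)] dh] vnorm_inf_nonneg[of dh] assms(3)
    by (smt (verit) mult_nonneg_nonneg of_nat_0_le_iff)
  ultimately show ?thesis using assms(1,5) by (simp add: algebra_simps)
qed

lemma quantized_affine_error_eq:
  fixes A dA :: "real^'n^'m"
  shows "(A + dA) *v (x + dx) + (a + da) - (A *v x + a) = A *v dx + dA *v x + dA *v dx + da"
  by (simp add: algebra_simps)

lemma quantized_affine_error_a_posteriori:
  fixes A dA :: "real^'n^'m"
  assumes "\<forall>c. \<bar>dx $ c\<bar> \<le> \<epsilon>"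
  shows "vnorm_inf (A *v dx + dA *v x + dA *v dx + da)
           \<le> mnorm_inf dA * vnorm_inf x + vnorm_inf da + mnorm_inf (A + dA) * \<epsilon>"
proof -
  have dx: "vnorm_inf dx \<le> \<epsilon>" using assms vnorm_inf_le_iff by blast
  have regroup: "A *v dx + dA *v x + dA *v dx + da = (A + dA) *v dx + dA *v x + da"
    by (simp add: algebra_simps)
  have "vnorm_inf ((A + dA) *v dx) \<le> mnorm_inf (A + dA) * \<epsilon>"
    using vnorm_inf_matrix_vector_mult_le[of "A + dA" dx]
      mult_left_mono[OF dx mnorm_inf_nonneg[of "A + dA"]] by linarith
  then show ?thesis
    unfolding regroup using vnorm_inf_triangle3[of "(A + dA) *v dx" "dA *v x" da]
      vnorm_inf_matrix_vector_mult_le[of dA x] by linarith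
qed

lemma quantized_affine_error_a_priori:
  fixes A dA :: "real^'n^'m"
  assumes "\<epsilon> \<ge> 0" "\<forall>r c. \<bar>dA $ r $ c\<bar> \<le> \<epsilon>" "\<forall>r. \<bar>da $ r\<bar> \<le> \<epsilon>" "\<forall>c. \<bar>dx $ c\<bar> \<le> \<epsilon>"
  shows "vnorm_inf (A *v dx + dA *v x + dA *v dx + da)
           \<le> \<epsilon> * (mnorm_inf A + real CARD('n) * vnorm_inf x + real CARD('n) * \<epsilon> + 1)"
proof -
  have dA: "mnorm_inf dA \<le> real CARD('n) * \<epsilon>" using mnorm_inf_le_entrywise[OF assms(2)] .
  have dx: "vnorm_inf dx \<le> \<epsilon>" and da: "vnorm_inf da \<le> \<epsilon>"
    using assms(3,4) vnorm_inf_le_iff by blast+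
  have "vnorm_inf (A *v dx) \<le> mnorm_inf A * \<epsilon>"
    using vnorm_inf_matrix_vector_mult_le[of A dx] mult_left_mono[OF dx mnorm_inf_nonneg[of A]]
    by linarith
  moreover have "vnorm_inf (dA *v x) \<le> real CARD('n) * \<epsilon> * vnorm_inf x"
    using vnorm_inf_matrix_vector_mult_le[of dA x] mult_right_mono[OF dA vnorm_inf_nonneg[of x]]
    by linarith
  moreover have "vnorm_inf (dA *v dx) \<le> real CARD('n) * \<epsilon> * \<epsilon>"
    using vnorm_inf_matrix_vector_mult_le[of dA dx]
      mult_mono[OF dA dx _ vnorm_inf_nonneg] assms(1) by simp
  ultimately show ?thesis
    using vnorm_inf_triangle3[of "A *v dx + dA *v x" "dA *v dx" da]
      vnorm_inf_triangle[of "A *v dx" "dA *v x"] da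
    by (simp add: algebra_simps)
qed

theorem theorem1:
  fixes u :: "real^'n \<Rightarrow> real^'m"
    and F :: "nat \<Rightarrow> real^'n^'m" and G :: "nat \<Rightarrow> real^'m"
    and P :: "nat \<Rightarrow> (real^'n) set"
    and nr i j :: nat
    and h :: "real^'n" and k :: real
    and \<epsilon> :: real
    and dF :: "real^'n^'m" and dG :: "real^'m" and dh :: "real^'n" and dk :: real
    and x dx :: "real^'n"
  assumes polys: "\<forall>l\<in>{1..nr}. polyhedron (P l)"
    and u_def: "\<forall>l\<in>{1..nr}. \<forall>z\<in>P l. u z = F l *v z + G l"
    and cont: "\<forall>l1\<in>{1..nr}. \<forall>l2\<in>{1..nr}. \<forall>z\<in>P l1 \<inter> P l2.
                 F l1 *v z + G l1 = F l2 *v z + G l2"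
    and ij: "i \<in> {1..nr}" "j \<in> {1..nr}" "i \<noteq> j"
    and h_nz: "h \<noteq> 0"
    and side_j: "\<forall>z\<in>P j. h \<bullet> z \<le> k"
    and side_i: "\<forall>z\<in>P i. h \<bullet> z \<ge> k"
    and eps: "\<epsilon> \<ge> 0"
    and dF_bd: "\<forall>r c. \<bar>dF $ r $ c\<bar> \<le> \<epsilon>"
    and dG_bd: "\<forall>r. \<bar>dG $ r\<bar> \<le> \<epsilon>"
    and dh_bd: "\<forall>c. \<bar>dh $ c\<bar> \<le> \<epsilon>"
    and dk_bd: "\<bar>dk\<bar> \<le> \<epsilon>"
    and dx_bd: "\<forall>c. \<bar>dx $ c\<bar> \<le> \<epsilon>"
    and xPj: "x \<in> P j"
    and proj: "hyperplane_proj h k x \<in> P i \<inter> P j"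
    and quant_side: "(h + dh) \<bullet> (x + dx) \<ge> k + dk"
  shows "let \<delta> = \<epsilon> * (vnorm1 h + vnorm1 x + real CARD('n) * \<epsilon> + 1);
             uhat = (F i + dF) *v (x + dx) + (G i + dG);
             E = F i *v dx + dF *v x + dF *v dx + dG
         in vnorm_inf (uhat - u x)
              \<le> \<delta> / (norm h)\<^sup>2 * vnorm_inf ((F i - F j) *v h) + vnorm_inf E
          \<and> vnorm_inf E \<le> mnorm_inf dF * vnorm_inf x + vnorm_inf dG + mnorm_inf (F i + dF) * \<epsilon>
          \<and> vnorm_inf E \<le> \<epsilon> * (mnorm_inf (F i) + real CARD('n) * vnorm_inf x + real CARD('n) * \<epsilon> + 1)"
proof -
  define \<delta> where "\<delta> = \<epsilon> * (vnorm1 h + vnorm1 x + real CARD('n) * \<epsilon> + 1)"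
  define E where "E = F i *v dx + dF *v x + dF *v dx + dG"
  define t where "t = (h \<bullet> x - k) / (norm h)\<^sup>2"
  have agree: "F i *v hyperplane_proj h k x + G i = F j *v hyperplane_proj h k x + G j"
    using cont ij proj by blast
  have jump: "(F i *v x + G i) - (F j *v x + G j) = t *\<^sub>R ((F i - F j) *v h)"
    by (rule affine_pieces_diff_eq[OF agree]) (simp add: hyperplane_proj_def t_def)
  have ux: "u x = F j *v x + G j" using u_def ij xPj by blast
  have "(F i + dF) *v (x + dx) + (G i + dG) - u x
      = ((F i *v x + G i) - (F j *v x + G j)) + ((F i + dF) *v (x + dx) + (G i + dG) - (F i *v x + G i))"
    unfolding ux by simp
  also have "\<dots> = t *\<^sub>R ((F i - F j) *v h) + E"
    unfolding jump quantized_affine_error_eq E_def ..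
  finally have split: "(F i + dF) *v (x + dx) + (G i + dG) - u x = t *\<^sub>R ((F i - F j) *v h) + E" .
  have "\<bar>h \<bullet> x - k\<bar> \<le> \<delta>"
    unfolding \<delta>_def
    using hyperplane_residual_le[OF _ quant_side eps dh_bd dk_bd dx_bd] side_j xPj by blast
  then have "\<bar>t\<bar> \<le> \<delta> / (norm h)\<^sup>2"
    unfolding t_def by (simp add: abs_div divide_right_mono)
  then have "vnorm_inf ((F i + dF) *v (x + dx) + (G i + dG) - u x)
      \<le> \<delta> / (norm h)\<^sup>2 * vnorm_inf ((F i - F j) *v h) + vnorm_inf E"
    unfolding split
    using vnorm_inf_triangle[of "t *\<^sub>R ((F i - F j) *v h)" E]
      vnorm_inf_scaleR_le[of t "(F i - F j) *v h"]
      mult_right_mono[OF _ vnorm_inf_nonneg, of "\<bar>t\<bar>" "\<delta> / (norm h)\<^sup>2" "(F i - F j) *v h"]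
    by linarith
  then show ?thesis
    using quantized_affine_error_a_posteriori[OF dx_bd, of "F i" dF x dG]
      quantized_affine_error_a_priori[OF eps dF_bd dG_bd dx_bd, of "F i" x]
    unfolding Let_def \<delta>_def E_def by blast
qed

end
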